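(* Let $F$ be a field of characteristic zero and let $A=A_0\oplus A_1$ be a unitary superalgebra over $F$ such that $A\cong F\dotplus J(A)$ (with $F$ identified with $F\cdot 1$ and $J(A)$ the Jacobson radical of $A$) and $A_0\not\subseteq Z(A)$. Then $Z(A)\cong F\dotplus J'$, where $J'=J(A)\cap Z(A)$. Moreover, if $J'$ is a graded ideal of $A$, then $C^{gr}(A)$ is a $T_2$-ideal of $F\langle Y,Z\rangle$.
   Context: A superalgebra is an associative algebra $A=A_0\oplus A_1$ with $A_iA_j\subseteq A_{i+j \bmod 2}$; $Z(A)$ is the center of $A$. An ideal $I$ is graded if $I=(I\cap A_0)\oplus(I\cap A_1)$. $F\langle Y,Z\rangle$ is the free associative algebra over $F$ on disjoint countable sets $Y=\{y_1,y_2,\dots\}$ (even variables) and $Z=\{z_1,z_2,\dots\}$ (odd variables), graded by the parity of the degree in the $Z$-variables. A polynomial $f(y_1,\dots,y_r,z_1,\dots,z_s)$ is a central graded polynomial of $A$ if it has zero constant term and $f(a_1,\dots,a_r,b_1,\dots,b_s)\in Z(A)$ for all $a_i\in A_0$, $b_j\in A_1$; $C^{gr}(A)$ is the set of all such polynomials. A $T_2$-ideal is an ideal of $F\langle Y,Z\rangle$ invariant under all grading-preserving endomorphisms of $F\langle Y,Z\rangle$. *)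

theory Defs
  imports Main
begin

text \<open>A unitary associative algebra over the field 'k is modelled as a type 'a of class
ring_1 (associative, unital) together with a scalar multiplication sc.\<close>

definition unital_algebra :: "('k::field \<Rightarrow> 'a::ring_1 \<Rightarrow> 'a) \<Rightarrow> bool" where
  "unital_algebra sc \<longleftrightarrow>
     (\<forall>c x y. sc c (x + y) = sc c x + sc c y) \<and>
     (\<forall>c d x. sc (c + d) x = sc c x + sc d x) \<and>
     (\<forall>c d x. sc (c * d) x = sc c (sc d x)) \<and>
     (\<forall>x. sc 1 x = x) \<and>
     (\<forall>c x y. sc c (x * y) = sc c x * y) \<and>
     (\<forall>c x y. sc c (x * y) = x * sc c y)"

definition subspace_of :: "('k::field \<Rightarrow> 'a::ring_1 \<Rightarrow> 'a) \<Rightarrow> 'a set \<Rightarrow> bool" where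
  "subspace_of sc V \<longleftrightarrow> 0 \<in> V \<and> (\<forall>x\<in>V. \<forall>y\<in>V. x + y \<in> V) \<and> (\<forall>c. \<forall>x\<in>V. sc c x \<in> V)"

definition superalgebra ::
  "('k::field \<Rightarrow> 'a::ring_1 \<Rightarrow> 'a) \<Rightarrow> 'a set \<Rightarrow> 'a set \<Rightarrow> bool" where
  "superalgebra sc A0 A1 \<longleftrightarrow>
     unital_algebra sc \<and> subspace_of sc A0 \<and> subspace_of sc A1 \<and>
     (\<forall>x. \<exists>!p. fst p \<in> A0 \<and> snd p \<in> A1 \<and> x = fst p + snd p) \<and>
     (\<forall>x\<in>A0. \<forall>y\<in>A0. x * y \<in> A0) \<and>
     (\<forall>x\<in>A0. \<forall>y\<in>A1. x * y \<in> A1) \<and>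
     (\<forall>x\<in>A1. \<forall>y\<in>A0. x * y \<in> A1) \<and>
     (\<forall>x\<in>A1. \<forall>y\<in>A1. x * y \<in> A0)"

definition alg_center :: "'a::ring_1 set" where
  "alg_center = {z. \<forall>x. z * x = x * z}"

definition jacobson :: "'a::ring_1 set" where
  "jacobson = {x. \<forall>a. \<exists>b. b * (1 - a * x) = 1}"

definition alg_ideal :: "('k::field \<Rightarrow> 'a::ring_1 \<Rightarrow> 'a) \<Rightarrow> 'a set \<Rightarrow> bool" where
  "alg_ideal sc I \<longleftrightarrow> subspace_of sc I \<and> (\<forall>x\<in>I. \<forall>a. a * x \<in> I \<and> x * a \<in> I)"

definition graded_ideal ::
  "('k::field \<Rightarrow> 'a::ring_1 \<Rightarrow> 'a) \<Rightarrow> 'a set \<Rightarrow> 'a set \<Rightarrow> 'a set \<Rightarrow> bool" where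
  "graded_ideal sc A0 A1 I \<longleftrightarrow> alg_ideal sc I \<and>
     (\<forall>x\<in>I. \<exists>x0 x1. x0 \<in> I \<inter> A0 \<and> x1 \<in> I \<inter> A1 \<and> x = x0 + x1)"

text \<open>Variables: Inl i is y_i (even), Inr j is z_j (odd). Monomials are words (lists of
variables); polynomials are finitely supported coefficient functions on words.\<close>

type_synonym var = "nat + nat"

definition fpoly :: "(var list \<Rightarrow> 'k::zero) set" where
  "fpoly = {f. finite {w. f w \<noteq> 0}}"

definition fmult :: "(var list \<Rightarrow> 'k::comm_ring_1) \<Rightarrow> (var list \<Rightarrow> 'k) \<Rightarrow> var list \<Rightarrow> 'k" where
  "fmult f g = (\<lambda>w. \<Sum>i\<le>length w. f (take i w) * g (drop i w))"

definition zdeg :: "var list \<Rightarrow> nat" where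
  "zdeg w = length (filter (\<lambda>v. case v of Inl _ \<Rightarrow> False | Inr _ \<Rightarrow> True) w)"

definition fpoly_even :: "(var list \<Rightarrow> 'k::zero) set" where
  "fpoly_even = {f \<in> fpoly. \<forall>w. f w \<noteq> 0 \<longrightarrow> even (zdeg w)}"

definition fpoly_odd :: "(var list \<Rightarrow> 'k::zero) set" where
  "fpoly_odd = {f \<in> fpoly. \<forall>w. f w \<noteq> 0 \<longrightarrow> odd (zdeg w)}"

definition fpoly_ideal :: "(var list \<Rightarrow> 'k::field) set \<Rightarrow> bool" where
  "fpoly_ideal I \<longleftrightarrow> I \<subseteq> fpoly \<and> (\<lambda>_. 0) \<in> I \<and>
     (\<forall>f\<in>I. \<forall>g\<in>I. (\<lambda>w. f w + g w) \<in> I) \<and>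
     (\<forall>c. \<forall>f\<in>I. (\<lambda>w. c * f w) \<in> I) \<and>
     (\<forall>f\<in>I. \<forall>g\<in>fpoly. fmult g f \<in> I \<and> fmult f g \<in> I)"

definition graded_endo :: "((var list \<Rightarrow> 'k::field) \<Rightarrow> (var list \<Rightarrow> 'k)) \<Rightarrow> bool" where
  "graded_endo \<phi> \<longleftrightarrow>
     (\<forall>f\<in>fpoly. \<phi> f \<in> fpoly) \<and>
     (\<forall>f\<in>fpoly. \<forall>g\<in>fpoly. \<phi> (\<lambda>w. f w + g w) = (\<lambda>w. \<phi> f w + \<phi> g w)) \<and>
     (\<forall>c. \<forall>f\<in>fpoly. \<phi> (\<lambda>w. c * f w) = (\<lambda>w. c * \<phi> f w)) \<and>
     (\<forall>f\<in>fpoly. \<forall>g\<in>fpoly. \<phi> (fmult f g) = fmult (\<phi> f) (\<phi> g)) \<and>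
     \<phi> ` fpoly_even \<subseteq> fpoly_even \<and> \<phi> ` fpoly_odd \<subseteq> fpoly_odd"

definition T2_ideal :: "(var list \<Rightarrow> 'k::field) set \<Rightarrow> bool" where
  "T2_ideal I \<longleftrightarrow> fpoly_ideal I \<and> (\<forall>\<phi>. graded_endo \<phi> \<longrightarrow> \<phi> ` I \<subseteq> I)"

definition peval ::
  "('k::field \<Rightarrow> 'a::ring_1 \<Rightarrow> 'a) \<Rightarrow> (var \<Rightarrow> 'a) \<Rightarrow> (var list \<Rightarrow> 'k) \<Rightarrow> 'a" where
  "peval sc \<rho> f = (\<Sum>w\<in>{w. f w \<noteq> 0}. sc (f w) (prod_list (map \<rho> w)))"

definition Cgr :: "('k::field \<Rightarrow> 'a::ring_1 \<Rightarrow> 'a) \<Rightarrow> 'a set \<Rightarrow> 'a set \<Rightarrow> (var list \<Rightarrow> 'k) set" where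
  "Cgr sc A0 A1 = {f \<in> fpoly. f [] = 0 \<and>
     (\<forall>\<rho>. (\<forall>i. \<rho> (Inl i) \<in> A0) \<and> (\<forall>j. \<rho> (Inr j) \<in> A1) \<longrightarrow> peval sc \<rho> f \<in> alg_center)}"

end

theory Submission
  imports Defs "HOL-Computational_Algebra.Polynomial"
begin

text \<open>Every element of \<open>A\<close> is a scalar plus an element of \<open>J(A)\<close>, and taking the scalar part is
  an algebra homomorphism \<open>A \<rightarrow> F\<close>; it vanishes on \<open>A\<^sub>1\<close> because the grading automorphism
  preserves \<open>J(A)\<close>. The heart of the proof is that a central graded polynomial takes all its
  graded values in \<open>J(A)\<close>: specialising it along an even non-central element gives a polynomial
  in one variable whose shifted values are all central, and in characteristic zero such a
  polynomial is constant. Closure under graded endomorphisms then follows by composing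
  evaluations, the constant term of the image being a scalar value of the polynomial, hence in
  \<open>J(A)\<close> and zero. Only the ideal property of \<open>J(A) \<inter> Z(A)\<close> is used, not its gradedness.\<close>

section \<open>Jacobson radical and centre of a unital ring\<close>

lemma jacobson_inverse:
  assumes "x \<in> jacobson"
  shows "\<exists>u. u * (1 - a * x) = 1 \<and> (1 - a * x) * u = 1"
proof -
  obtain u where u: "u * (1 - a * x) = 1" using assms unfolding jacobson_def by blast
  obtain v where v: "v * (1 - (- (u * a)) * x) = 1" using assms unfolding jacobson_def by blast
  have "1 - (- (u * a)) * x = u"
    using u by (simp add: algebra_simps mult.assoc eq_diff_eq)
  then have vu: "v * u = 1" using v by simp
  have "v = v * (u * (1 - a * x))" using u by simp
  also have "\<dots> = 1 - a * x" by (simp add: mult.assoc[symmetric] vu)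
  finally show ?thesis using u vu by blast
qed

lemma jacobson_add:
  assumes "x \<in> jacobson" "y \<in> jacobson"
  shows "x + y \<in> jacobson"
  unfolding jacobson_def mem_Collect_eq
proof
  fix a
  obtain u where u: "u * (1 - a * x) = 1" "(1 - a * x) * u = 1"
    using jacobson_inverse[OF assms(1)] by blast
  obtain w where w: "w * (1 - (u * a) * y) = 1" using assms(2) unfolding jacobson_def by blast
  have "(1 - a * x) * (1 - u * a * y) = (1 - a * x) - ((1 - a * x) * u) * a * y"
    by (simp add: algebra_simps)
  also have "\<dots> = 1 - a * (x + y)" by (simp only: u(2)) (simp add: algebra_simps)
  finally have "(w * u) * (1 - a * (x + y)) = w * ((u * (1 - a * x)) * (1 - u * a * y))"
    by (simp add: mult.assoc)
  also have "\<dots> = 1" by (simp only: u(1) mult_1_left w)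
  finally show "\<exists>b. b * (1 - a * (x + y)) = 1" by blast
qed

lemma jacobson_mult_left:
  assumes "x \<in> jacobson"
  shows "s * x \<in> jacobson"
  unfolding jacobson_def mem_Collect_eq
proof
  fix a
  obtain b where "b * (1 - (a * s) * x) = 1" using assms unfolding jacobson_def by blast
  then show "\<exists>b. b * (1 - a * (s * x)) = 1" by (auto simp: mult.assoc)
qed

lemma jacobson_mult_right:
  assumes "x \<in> jacobson"
  shows "x * s \<in> jacobson"
  unfolding jacobson_def mem_Collect_eq
proof
  fix a
  obtain u where u: "u * (1 - (s * a) * x) = 1" using jacobson_inverse[OF assms] by blast
  have "(1 + a * x * u * s) * (1 - a * (x * s)) = 1 - a * x * s + a * x * (u * (1 - s * a * x)) * s"
    by (simp add: algebra_simps)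
  also have "\<dots> = 1" by (simp only: u mult_1_right) simp
  finally show "\<exists>b. b * (1 - a * (x * s)) = 1" by blast
qed

lemma jacobson_0: "0 \<in> jacobson"
  unfolding jacobson_def by simp

lemma jacobson_not_left_invertible:
  assumes "x \<in> jacobson"
  shows "v * x \<noteq> 1"
proof
  assume "v * x = 1"
  moreover obtain b where "b * (1 - v * x) = 1" using assms unfolding jacobson_def by blast
  ultimately show False by simp
qed

lemma center_add: "z \<in> alg_center \<Longrightarrow> w \<in> alg_center \<Longrightarrow> z + w \<in> alg_center"
  unfolding alg_center_def by (simp add: distrib_left distrib_right)

lemma center_diff: "z \<in> alg_center \<Longrightarrow> w \<in> alg_center \<Longrightarrow> z - w \<in> alg_center"
  unfolding alg_center_def by (simp add: left_diff_distrib right_diff_distrib)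

lemma center_0: "0 \<in> alg_center"
  unfolding alg_center_def by simp

section \<open>The free algebra\<close>

abbreviation supp :: "(var list \<Rightarrow> 'k::zero) \<Rightarrow> var list set" where
  "supp f \<equiv> {w. f w \<noteq> 0}"

definition fmonom :: "var list \<Rightarrow> var list \<Rightarrow> 'k::zero_neq_one" where
  "fmonom u = (\<lambda>w. if w = u then 1 else 0)"

lemma fpoly_finite_supp: "f \<in> fpoly \<Longrightarrow> finite (supp f)"
  unfolding fpoly_def by simp

lemma fpoly_zero: "(\<lambda>w. 0) \<in> fpoly"
  unfolding fpoly_def by simp

lemma fpoly_add:
  fixes f g :: "var list \<Rightarrow> 'k::monoid_add"
  assumes "f \<in> fpoly" "g \<in> fpoly"
  shows "(\<lambda>w. f w + g w) \<in> fpoly"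
proof -
  have "finite (supp f \<union> supp g)" using assms unfolding fpoly_def by simp
  then show ?thesis unfolding fpoly_def mem_Collect_eq by (rule finite_subset[rotated]) auto
qed

lemma fpoly_scale:
  fixes f :: "var list \<Rightarrow> 'k::mult_zero"
  assumes "f \<in> fpoly"
  shows "(\<lambda>w. c * f w) \<in> fpoly"
proof -
  have "finite (supp f)" using assms unfolding fpoly_def by simp
  then show ?thesis unfolding fpoly_def mem_Collect_eq by (rule finite_subset[rotated]) auto
qed

lemma fmonom_fpoly: "fmonom u \<in> fpoly"
  unfolding fpoly_def fmonom_def mem_Collect_eq by (rule finite_subset[of _ "{u}"]) auto

lemma supp_fmult: "supp (fmult f g) \<subseteq> (\<lambda>(u, v). u @ v) ` (supp f \<times> supp g)"
proof
  fix w assume "w \<in> supp (fmult f g)"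
  then have "(\<Sum>i\<le>length w. f (take i w) * g (drop i w)) \<noteq> 0" unfolding fmult_def by simp
  then obtain i where "f (take i w) * g (drop i w) \<noteq> 0"
    by (rule sum.not_neutral_contains_not_neutral)
  then show "w \<in> (\<lambda>(u, v). u @ v) ` (supp f \<times> supp g)"
    by (intro image_eqI[of _ _ "(take i w, drop i w)"]) auto
qed

lemma fpoly_fmult:
  assumes "f \<in> fpoly" "g \<in> fpoly"
  shows "fmult f g \<in> fpoly"
proof -
  have "finite ((\<lambda>(u, v). u @ v) ` (supp f \<times> supp g))"
    using assms by (simp add: fpoly_finite_supp)
  then show ?thesis unfolding fpoly_def mem_Collect_eq using supp_fmult by (rule finite_subset[rotated])
qed

lemma fmult_Nil: "fmult f g [] = f [] * g []"
  unfolding fmult_def by simp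

lemma fmult_fmonom: "fmult (fmonom u) (fmonom v) = (fmonom (u @ v) :: var list \<Rightarrow> 'k::comm_ring_1)"
proof
  fix w
  have "fmult (fmonom u) (fmonom v) w
      = (\<Sum>i\<le>length w. if i = length u then (if take i w = u \<and> drop i w = v then 1 else 0) else 0)"
    unfolding fmult_def by (rule sum.cong) (auto simp: fmonom_def)
  also have "\<dots> = (if length u \<le> length w \<and> take (length u) w = u \<and> drop (length u) w = v
                    then 1 else 0)"
    by (simp add: sum.delta)
  also have "\<dots> = fmonom (u @ v) w"
  proof -
    have "length u \<le> length w \<and> take (length u) w = u \<and> drop (length u) w = v \<longleftrightarrow> w = u @ v"
      by (metis append_eq_conv_conj append_take_drop_id length_append le_add1)
    then show ?thesis unfolding fmonom_def by simp
  qed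
  finally show "fmult (fmonom u) (fmonom v) w = fmonom (u @ v) w" .
qed

lemma fpoly_eq_sum_fmonom:
  fixes f :: "var list \<Rightarrow> 'k::comm_ring_1"
  assumes "f \<in> fpoly"
  shows "f = (\<lambda>x. \<Sum>w\<in>supp f. f w * fmonom w x)"
proof
  fix x
  have "(\<Sum>w\<in>supp f. f w * fmonom w x) = (\<Sum>w\<in>supp f. if w = x then f w else 0)"
    by (rule sum.cong) (auto simp: fmonom_def)
  also have "\<dots> = f x" using fpoly_finite_supp[OF assms] by (simp add: sum.delta')
  finally show "f x = (\<Sum>w\<in>supp f. f w * fmonom w x)" by simp
qed

lemma zdeg_Cons: "zdeg (v # w) = (case v of Inl _ \<Rightarrow> 0 | Inr _ \<Rightarrow> 1) + zdeg w"
  unfolding zdeg_def by (cases v) auto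

lemma fmonom_even: "fmonom [Inl i] \<in> fpoly_even"
  unfolding fpoly_even_def using fmonom_fpoly by (auto simp: fmonom_def zdeg_def)

lemma fmonom_odd: "fmonom [Inr j] \<in> fpoly_odd"
  unfolding fpoly_odd_def using fmonom_fpoly by (auto simp: fmonom_def zdeg_def)

lemma
  assumes "graded_endo \<phi>"
  shows graded_endo_fpoly: "f \<in> fpoly \<Longrightarrow> \<phi> f \<in> fpoly"
    and graded_endo_add:
      "f \<in> fpoly \<Longrightarrow> g \<in> fpoly \<Longrightarrow> \<phi> (\<lambda>w. f w + g w) = (\<lambda>w. \<phi> f w + \<phi> g w)"
    and graded_endo_scale: "f \<in> fpoly \<Longrightarrow> \<phi> (\<lambda>w. c * f w) = (\<lambda>w. c * \<phi> f w)"
    and graded_endo_fmult: "f \<in> fpoly \<Longrightarrow> g \<in> fpoly \<Longrightarrow> \<phi> (fmult f g) = fmult (\<phi> f) (\<phi> g)"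
    and graded_endo_even: "f \<in> fpoly_even \<Longrightarrow> \<phi> f \<in> fpoly_even"
    and graded_endo_odd: "f \<in> fpoly_odd \<Longrightarrow> \<phi> f \<in> fpoly_odd"
  using assms unfolding graded_endo_def by (simp_all add: image_subset_iff)

section \<open>Unital algebras over a field\<close>

locale scalar_algebra =
  fixes sc :: "'k::field \<Rightarrow> 'a::ring_1 \<Rightarrow> 'a"
  assumes unital_algebra: "unital_algebra sc"
begin

lemma sc_add_right: "sc c (x + y) = sc c x + sc c y"
  and sc_add_left: "sc (c + d) x = sc c x + sc d x"
  and sc_mult: "sc (c * d) x = sc c (sc d x)"
  and sc_one [simp]: "sc 1 x = x"
  and sc_mult_left: "sc c (x * y) = sc c x * y"
  and sc_mult_right: "sc c (x * y) = x * sc c y"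
  using unital_algebra unfolding unital_algebra_def by blast+

lemmas sc_sc = sc_mult[symmetric]
  and mult_sc_left = sc_mult_left[symmetric]
  and mult_sc_right = sc_mult_right[symmetric]

lemma sc_eq_mult_sc_one: "sc c x = sc c 1 * x"
  by (simp add: mult_sc_left)

lemma sc_one_commute: "sc c 1 * x = x * sc c 1"
  by (simp add: mult_sc_left mult_sc_right)

lemma sc_zero_right [simp]: "sc c 0 = 0"
  using sc_add_right[of c 0 0] by simp

lemma sc_zero_left [simp]: "sc 0 x = 0"
  using sc_add_left[of 0 0 x] by simp

lemma sc_diff_right: "sc c (x - y) = sc c x - sc c y"
  using sc_add_right[of c "x - y" y] by (simp add: eq_diff_eq)

lemma sc_minus_one: "sc (- 1) x = - x"
  using sc_add_left[of 1 "- 1" x] by (simp add: eq_neg_iff_add_eq_0 add.commute)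

lemma sc_sum_right: "sc c (\<Sum>i\<in>S. f i) = (\<Sum>i\<in>S. sc c (f i))"
  by (induction S rule: infinite_finite_induct) (auto simp: sc_add_right)

lemma sc_sum_left: "sc (\<Sum>i\<in>S. f i) x = (\<Sum>i\<in>S. sc (f i) x)"
  by (induction S rule: infinite_finite_induct) (auto simp: sc_add_left)

lemma sc_mult_sc: "sc c x * sc d y = sc (c * d) (x * y)"
  by (simp add: mult_sc_left mult_sc_right sc_sc mult.commute)

lemma sc_one_center: "sc c 1 \<in> alg_center"
  unfolding alg_center_def using sc_one_commute by blast

lemma sc_center: "z \<in> alg_center \<Longrightarrow> sc c z \<in> alg_center"
  unfolding alg_center_def by (simp add: mult_sc_left mult_sc_right)

lemma sc_jacobson: "x \<in> jacobson \<Longrightarrow> sc c x \<in> jacobson"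
  by (subst sc_eq_mult_sc_one) (rule jacobson_mult_left)

lemma sc_one_jacobson_iff: "sc c 1 \<in> jacobson \<longleftrightarrow> c = 0"
proof
  assume "sc c 1 \<in> jacobson"
  moreover have "sc (inverse c) 1 * sc c 1 = 1" if "c \<noteq> 0"
    using that by (simp add: sc_mult_sc)
  ultimately show "c = 0" using jacobson_not_left_invertible by blast
qed (simp add: jacobson_0)

abbreviation monomial_value :: "(var \<Rightarrow> 'a) \<Rightarrow> var list \<Rightarrow> 'a" where
  "monomial_value \<rho> w \<equiv> prod_list (map \<rho> w)"

lemma peval_superset:
  assumes "finite S" "supp f \<subseteq> S"
  shows "peval sc \<rho> f = (\<Sum>w\<in>S. sc (f w) (monomial_value \<rho> w))"
  unfolding peval_def by (rule sum.mono_neutral_left) (use assms in auto)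

lemma peval_zero: "peval sc \<rho> (\<lambda>w. 0) = 0"
  unfolding peval_def by simp

lemma peval_add:
  assumes "f \<in> fpoly" "g \<in> fpoly"
  shows "peval sc \<rho> (\<lambda>w. f w + g w) = peval sc \<rho> f + peval sc \<rho> g"
proof -
  define S where "S = supp f \<union> supp g"
  have S: "finite S" using assms fpoly_finite_supp unfolding S_def by blast
  have "peval sc \<rho> (\<lambda>w. f w + g w) = (\<Sum>w\<in>S. sc (f w + g w) (monomial_value \<rho> w))"
    by (rule peval_superset[OF S]) (auto simp: S_def)
  also have "\<dots> = (\<Sum>w\<in>S. sc (f w) (monomial_value \<rho> w)) + (\<Sum>w\<in>S. sc (g w) (monomial_value \<rho> w))"
    by (simp add: sc_add_left sum.distrib)
  also have "\<dots> = peval sc \<rho> f + peval sc \<rho> g"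
    using peval_superset[OF S, of f \<rho>] peval_superset[OF S, of g \<rho>] by (auto simp: S_def)
  finally show ?thesis .
qed

lemma peval_scale:
  assumes "f \<in> fpoly"
  shows "peval sc \<rho> (\<lambda>w. c * f w) = sc c (peval sc \<rho> f)"
proof -
  have "peval sc \<rho> (\<lambda>w. c * f w) = (\<Sum>w\<in>supp f. sc (c * f w) (monomial_value \<rho> w))"
    by (rule peval_superset) (auto simp: fpoly_finite_supp[OF assms])
  then show ?thesis unfolding peval_def by (simp add: sc_sum_right sc_mult)
qed

lemma peval_fmult:
  assumes f: "f \<in> fpoly" and g: "g \<in> fpoly"
  shows "peval sc \<rho> (fmult f g) = peval sc \<rho> f * peval sc \<rho> g"
proof -
  define W where "W = (\<lambda>(u, v). u @ v) ` (supp f \<times> supp g)"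
  have W: "finite W" using f g unfolding W_def by (simp add: fpoly_finite_supp)
  define h where "h = (\<lambda>(u::var list, v::var list). (u @ v, length u))"
  define F where "F = (\<lambda>(w, i). sc (f (take i w) * g (drop i w)) (monomial_value \<rho> w))"
  define P where "P = Sigma W (\<lambda>w. {..length w})"
  have "peval sc \<rho> (fmult f g) = (\<Sum>w\<in>W. sc (fmult f g w) (monomial_value \<rho> w))"
    by (rule peval_superset[OF W]) (use supp_fmult in \<open>auto simp: W_def\<close>)
  also have "\<dots> = (\<Sum>w\<in>W. \<Sum>i\<le>length w. F (w, i))"
    unfolding fmult_def F_def by (simp add: sc_sum_left)
  also have "\<dots> = sum F P"
    unfolding P_def by (subst sum.Sigma) (use W in \<open>auto simp: case_prod_eta\<close>)
  also have "\<dots> = sum F (h ` (supp f \<times> supp g))"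
  proof (rule sum.mono_neutral_right)
    show "finite P" unfolding P_def using W by auto
    show "h ` (supp f \<times> supp g) \<subseteq> P" unfolding P_def W_def h_def by auto
    show "\<forall>x\<in>P - h ` (supp f \<times> supp g). F x = 0"
    proof
      fix x assume x: "x \<in> P - h ` (supp f \<times> supp g)"
      then obtain w i where xi: "x = (w, i)" "i \<le> length w" unfolding P_def by auto
      have "h (take i w, drop i w) = x" unfolding h_def xi using xi(2) by simp
      then have "f (take i w) = 0 \<or> g (drop i w) = 0" using x by force
      then show "F x = 0" unfolding F_def xi(1) by auto
    qed
  qed
  also have "\<dots> = sum (F \<circ> h) (supp f \<times> supp g)"
    by (rule sum.reindex) (auto simp: h_def inj_on_def)
  also have "\<dots> = (\<Sum>(u, v)\<in>supp f \<times> supp g. sc (f u) (monomial_value \<rho> u) * sc (g v) (monomial_value \<rho> v))"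
    by (rule sum.cong) (auto simp: F_def h_def sc_mult_sc)
  also have "\<dots> = peval sc \<rho> f * peval sc \<rho> g"
    unfolding peval_def by (simp add: sum.cartesian_product[symmetric] sum_product)
  finally show ?thesis .
qed

lemma peval_zero_assignment:
  assumes "f \<in> fpoly"
  shows "peval sc (\<lambda>_. 0) f = sc (f []) 1"
proof -
  have "peval sc (\<lambda>_. 0) f = (\<Sum>w\<in>insert [] (supp f). if w = [] then sc (f w) 1 else 0)"
    by (rule trans[OF peval_superset sum.cong])
      (auto simp: fpoly_finite_supp[OF assms] neq_Nil_conv)
  then show ?thesis using fpoly_finite_supp[OF assms] by (simp add: sum.delta)
qed

lemma hom_eq_peval:
  fixes Psi :: "(var list \<Rightarrow> 'k) \<Rightarrow> 'a"
  assumes add: "\<And>f g. f \<in> fpoly \<Longrightarrow> g \<in> fpoly \<Longrightarrow> Psi (\<lambda>w. f w + g w) = Psi f + Psi g"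
    and scale: "\<And>c f. f \<in> fpoly \<Longrightarrow> Psi (\<lambda>w. c * f w) = sc c (Psi f)"
    and mult: "\<And>f g. f \<in> fpoly \<Longrightarrow> g \<in> fpoly \<Longrightarrow> Psi (fmult f g) = Psi f * Psi g"
    and f: "f \<in> fpoly" "f [] = 0"
  shows "Psi f = peval sc (\<lambda>v. Psi (fmonom [v])) f"
proof -
  have monom: "Psi (fmonom w) = monomial_value (\<lambda>v. Psi (fmonom [v])) w" if "w \<noteq> []" for w
    using that
  proof (induction w)
    case (Cons v w)
    have "Psi (fmonom (v # w)) = Psi (fmult (fmonom [v]) (fmonom w))"
      by (simp add: fmult_fmonom)
    also have "\<dots> = Psi (fmonom [v]) * Psi (fmonom w)"
      by (rule mult[OF fmonom_fpoly fmonom_fpoly])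
    finally have "Psi (fmonom (v # w)) = Psi (fmonom [v]) * Psi (fmonom w)" .
    then show ?case using Cons by (cases "w = []") simp_all
  qed simp
  have Psi_0: "Psi (\<lambda>w. 0) = 0"
    using add[OF fpoly_zero fpoly_zero] by simp
  have linear: "(\<lambda>x. \<Sum>w\<in>S. f w * fmonom w x) \<in> fpoly \<and>
      Psi (\<lambda>x. \<Sum>w\<in>S. f w * fmonom w x) = (\<Sum>w\<in>S. sc (f w) (Psi (fmonom w)))"
    if "finite S" for S
    using that
  proof (induction S rule: finite_induct)
    case (insert a S)
    have a: "(\<lambda>x. f a * fmonom a x) \<in> fpoly" using fpoly_scale[OF fmonom_fpoly] .
    show ?case
      using insert add[OF a insert.IH[THEN conjunct1]] scale[OF fmonom_fpoly, of "f a" a]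
        fpoly_add[OF a insert.IH[THEN conjunct1]]
      by simp
  qed (simp add: Psi_0 fpoly_zero)
  have "Psi f = (\<Sum>w\<in>supp f. sc (f w) (Psi (fmonom w)))"
    using linear[OF fpoly_finite_supp[OF f(1)]] fpoly_eq_sum_fmonom[OF f(1)] by simp
  also have "\<dots> = peval sc (\<lambda>v. Psi (fmonom [v])) f"
    unfolding peval_def using f(2) by (intro sum.cong refl) (metis mem_Collect_eq monom)
  finally show ?thesis .
qed

lemma peval_endo:
  assumes \<phi>: "graded_endo \<phi>" and f: "f \<in> fpoly" "f [] = 0"
  shows "peval sc \<rho> (\<phi> f) = peval sc (\<lambda>v. peval sc \<rho> (\<phi> (fmonom [v]))) f"
  by (rule hom_eq_peval[OF _ _ _ f])
    (simp_all add: \<phi> graded_endo_fpoly graded_endo_add graded_endo_scale graded_endo_fmult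
      peval_add peval_scale peval_fmult)

end

section \<open>Polynomials in one variable\<close>

lemma degree_difference_less:
  fixes p :: "'k::idom poly"
  assumes "degree p > 0"
  shows "degree (pcompose p [:1, 1:] - p) < degree p"
proof (rule degree_lessI)
  have "degree (pcompose p [:1, 1:]) = degree p" by (simp add: degree_pcompose)
  moreover have "lead_coeff (pcompose p [:1, 1:]) = lead_coeff p" by (simp add: lead_coeff_comp)
  ultimately show "\<forall>k\<ge>degree p. coeff (pcompose p [:1, 1:] - p) k = 0"
    by (metis coeff_diff coeff_eq_0 diff_self le_neq_implies_less)
qed (use assms in simp)

lemma linear_if_difference_const:
  fixes p :: "'k::field_char_0 poly"
  assumes "pcompose p [:1, 1:] - p = [:c:]"
  shows "p = [:poly p 0, c:]"
proof -
  define q where "q = p - [:poly p 0, c:]"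
  have step: "poly q (x + 1) = poly q x" for x
    using arg_cong[OF assms, of "\<lambda>r. poly r x"] by (simp add: q_def poly_pcompose algebra_simps)
  have "poly q (of_nat n) = 0" for n
  proof (induction n)
    case (Suc n)
    have "poly q (of_nat (Suc n)) = poly q (of_nat n + 1)" by (simp add: add.commute)
    then show ?case using Suc step by simp
  qed (simp add: q_def)
  then have "range (of_nat :: nat \<Rightarrow> 'k) \<subseteq> {x. poly q x = 0}" by auto
  moreover have "infinite (range (of_nat :: nat \<Rightarrow> 'k))"
    by (rule range_inj_infinite) (rule inj_of_nat)
  ultimately have "q = 0" using poly_roots_finite finite_subset by blast
  then show ?thesis unfolding q_def by simp
qed

definition subst_poly :: "(var list \<Rightarrow> 'k::comm_ring_1) \<Rightarrow> (var \<Rightarrow> 'k) \<Rightarrow> 'k poly" where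
  "subst_poly f l = (\<Sum>w\<in>supp f. monom (f w * prod_list (map l w)) (length w))"

lemma poly_subst_poly_1: "poly (subst_poly f l) 1 = (\<Sum>w\<in>supp f. f w * prod_list (map l w))"
  unfolding subst_poly_def by (simp add: poly_sum poly_monom)

lemma coeff_0_subst_poly: "finite (supp f) \<Longrightarrow> coeff (subst_poly f l) 0 = f []"
  unfolding subst_poly_def coeff_sum by (cases "f [] = 0") (simp_all add: coeff_monom sum.delta)

context scalar_algebra
begin

definition alg_poly :: "'k poly \<Rightarrow> 'a \<Rightarrow> 'a" where
  "alg_poly p u = foldr (\<lambda>c v. sc c 1 + u * v) (coeffs p) 0"

lemma alg_poly_0 [simp]: "alg_poly 0 u = 0"
  unfolding alg_poly_def by simp

lemma alg_poly_pCons [simp]: "alg_poly (pCons c p) u = sc c 1 + u * alg_poly p u"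
  by (cases "p = 0 \<and> c = 0") (auto simp: alg_poly_def cCons_def)

lemma alg_poly_add: "alg_poly (p + q) u = alg_poly p u + alg_poly q u"
proof (induction p arbitrary: q)
  case (pCons a p)
  then show ?case by (cases q) (simp add: sc_add_left algebra_simps)
qed simp

lemma alg_poly_diff: "alg_poly (p - q) u = alg_poly p u - alg_poly q u"
  using alg_poly_add[of "p - q" q u] by (simp add: eq_diff_eq)

lemma alg_poly_smult: "alg_poly (smult c p) u = sc c (alg_poly p u)"
  by (induction p) (simp_all add: sc_add_right sc_mult mult_sc_right)

lemma alg_poly_mult: "alg_poly (p * q) u = alg_poly p u * alg_poly q u"
  by (induction p)
    (simp_all add: alg_poly_add alg_poly_smult algebra_simps sc_eq_mult_sc_one[of _ "alg_poly q u"])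

lemma alg_poly_pcompose: "alg_poly (pcompose p q) u = alg_poly p (alg_poly q u)"
  by (induction p) (simp_all add: pcompose_pCons alg_poly_add alg_poly_mult)

lemma alg_poly_monom: "alg_poly (monom c k) u = sc c (u ^ k)"
  by (induction k) (simp_all add: monom_0 monom_Suc mult_sc_right)

lemma alg_poly_sum: "alg_poly (\<Sum>i\<in>S. p i) u = (\<Sum>i\<in>S. alg_poly (p i) u)"
  by (induction S rule: infinite_finite_induct) (auto simp: alg_poly_add)


lemma alg_poly_subst_poly: "alg_poly (subst_poly f l) u = peval sc (\<lambda>v. sc (l v) u) f"
proof -
  have "monomial_value (\<lambda>v. sc (l v) u) w = sc (prod_list (map l w)) (u ^ length w)" for w
    by (induction w) (simp_all add: sc_mult_sc)
  then show ?thesis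
    unfolding subst_poly_def peval_def by (simp add: alg_poly_sum alg_poly_monom sc_mult)
qed

definition centralizing_polys :: "'a \<Rightarrow> 'k poly set" where
  "centralizing_polys a = {p. \<forall>s. alg_poly p (sc s 1 + a) \<in> alg_center}"

lemma centralizing_polys_diff:
  "p \<in> centralizing_polys a \<Longrightarrow> q \<in> centralizing_polys a \<Longrightarrow> p - q \<in> centralizing_polys a"
  unfolding centralizing_polys_def by (auto simp: alg_poly_diff center_diff)

lemma centralizing_polys_smult: "p \<in> centralizing_polys a \<Longrightarrow> smult c p \<in> centralizing_polys a"
  unfolding centralizing_polys_def by (auto simp: alg_poly_smult sc_center)

lemma centralizing_polys_const: "[:c:] \<in> centralizing_polys a"
  unfolding centralizing_polys_def by (auto simp: sc_one_center)

lemma centralizing_polys_shift: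
  assumes "p \<in> centralizing_polys a"
  shows "pcompose p [:t, 1:] \<in> centralizing_polys a"
  unfolding centralizing_polys_def mem_Collect_eq
proof
  fix s
  have "alg_poly (pcompose p [:t, 1:]) (sc s 1 + a) = alg_poly p (sc (t + s) 1 + a)"
    by (simp add: alg_poly_pcompose sc_add_left add.assoc)
  then show "alg_poly (pcompose p [:t, 1:]) (sc s 1 + a) \<in> alg_center"
    using assms unfolding centralizing_polys_def by simp
qed

lemma centralizing_polys_X: "[:0, 1:] \<in> centralizing_polys a \<Longrightarrow> a \<in> alg_center"
  unfolding centralizing_polys_def by (auto dest: spec[of _ 0])

end

locale scalar_algebra_char_0 = scalar_algebra sc
  for sc :: "'k::field_char_0 \<Rightarrow> 'a::ring_1 \<Rightarrow> 'a"
begin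

lemma centralizing_polys_degree_0:
  assumes "a \<notin> alg_center" "p \<in> centralizing_polys a"
  shows "degree p = 0"
  using assms(2)
proof (induction "degree p" arbitrary: p rule: less_induct)
  case less
  show ?case
  proof (rule ccontr)
    assume p: "degree p \<noteq> 0"
    define D where "D = pcompose p [:1, 1:] - p"
    have "D \<in> centralizing_polys a"
      unfolding D_def by (intro centralizing_polys_diff centralizing_polys_shift less.prems)
    moreover have "degree D < degree p"
      unfolding D_def using p by (simp add: degree_difference_less)
    ultimately have "degree D = 0" using less.hyps by blast
    then have p_eq: "p = [:poly p 0, coeff D 0:]"
      by (intro linear_if_difference_const) (metis D_def degree_0_id)
    then have "coeff D 0 \<noteq> 0" using p by (metis degree_pCons_0 pCons_0_0)
    moreover have "smult (1 / coeff D 0) (p - [:poly p 0:]) \<in> centralizing_polys a"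
      by (intro centralizing_polys_smult centralizing_polys_diff less.prems centralizing_polys_const)
    moreover have "p - [:poly p 0:] = [:0, coeff D 0:]"
      by (subst p_eq) simp
    ultimately have "[:0, 1:] \<in> centralizing_polys a" by simp
    then show False using assms(1) centralizing_polys_X by blast
  qed
qed

end

section \<open>Superalgebras\<close>

locale super_algebra =
  fixes sc :: "'k::field \<Rightarrow> 'a::ring_1 \<Rightarrow> 'a"
    and A0 A1 :: "'a set"
  assumes superalgebra: "superalgebra sc A0 A1"

sublocale super_algebra \<subseteq> scalar_algebra
  using superalgebra by unfold_locales (simp add: superalgebra_def)

context super_algebra
begin

lemma A0_0: "0 \<in> A0" and A0_add: "x \<in> A0 \<Longrightarrow> y \<in> A0 \<Longrightarrow> x + y \<in> A0"
  and A0_sc: "x \<in> A0 \<Longrightarrow> sc c x \<in> A0"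
  and A1_0: "0 \<in> A1" and A1_add: "x \<in> A1 \<Longrightarrow> y \<in> A1 \<Longrightarrow> x + y \<in> A1"
  and A1_sc: "x \<in> A1 \<Longrightarrow> sc c x \<in> A1"
  using superalgebra unfolding superalgebra_def subspace_of_def by blast+

lemma mult_A0_A0: "x \<in> A0 \<Longrightarrow> y \<in> A0 \<Longrightarrow> x * y \<in> A0"
  and mult_A0_A1: "x \<in> A0 \<Longrightarrow> y \<in> A1 \<Longrightarrow> x * y \<in> A1"
  and mult_A1_A0: "x \<in> A1 \<Longrightarrow> y \<in> A0 \<Longrightarrow> x * y \<in> A1"
  and mult_A1_A1: "x \<in> A1 \<Longrightarrow> y \<in> A1 \<Longrightarrow> x * y \<in> A0"
  using superalgebra unfolding superalgebra_def by blast+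

lemma A1_uminus: "x \<in> A1 \<Longrightarrow> - x \<in> A1"
  using A1_sc[of x "- 1"] by (simp add: sc_minus_one)

lemma A0_sum: "(\<And>i. i \<in> S \<Longrightarrow> f i \<in> A0) \<Longrightarrow> (\<Sum>i\<in>S. f i) \<in> A0"
  by (induction S rule: infinite_finite_induct) (auto simp: A0_0 A0_add)

lemma A1_sum: "(\<And>i. i \<in> S \<Longrightarrow> f i \<in> A1) \<Longrightarrow> (\<Sum>i\<in>S. f i) \<in> A1"
  by (induction S rule: infinite_finite_induct) (auto simp: A1_0 A1_add)

lemma graded_decomposition: "\<exists>!p. fst p \<in> A0 \<and> snd p \<in> A1 \<and> x = fst p + snd p"
  using superalgebra unfolding superalgebra_def by blast

definition even_part :: "'a \<Rightarrow> 'a" where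
  "even_part x = fst (THE p. fst p \<in> A0 \<and> snd p \<in> A1 \<and> x = fst p + snd p)"

definition odd_part :: "'a \<Rightarrow> 'a" where
  "odd_part x = snd (THE p. fst p \<in> A0 \<and> snd p \<in> A1 \<and> x = fst p + snd p)"

lemma even_part_odd_part: "even_part x \<in> A0" "odd_part x \<in> A1" "x = even_part x + odd_part x"
  using theI'[OF graded_decomposition[of x]] unfolding even_part_def odd_part_def by blast+

lemma parts_unique:
  assumes "a \<in> A0" "b \<in> A1" "x = a + b"
  shows "even_part x = a" "odd_part x = b"
proof -
  have "(THE p. fst p \<in> A0 \<and> snd p \<in> A1 \<and> x = fst p + snd p) = (a, b)"
    using assms by (intro the1_equality[OF graded_decomposition]) auto
  then show "even_part x = a" "odd_part x = b" unfolding even_part_def odd_part_def by auto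
qed

lemma one_A0: "1 \<in> A0"
proof -
  define e0 e1 where "e0 = even_part 1" and "e1 = odd_part 1"
  have e0: "e0 \<in> A0" and e1: "e1 \<in> A1" and one: "1 = e0 + e1"
    using even_part_odd_part[of 1] unfolding e0_def e1_def by simp_all
  have "e1 = e1 * e1 + e0 * e1" using one by (metis add.commute distrib_right mult_1_left)
  then have "e0 * e1 = e1"
    using parts_unique(2)[OF A0_0 e1] parts_unique(2)[OF mult_A1_A1[OF e1 e1] mult_A0_A1[OF e0 e1]]
    by simp
  moreover have "e0 = e0 * e0 + e0 * e1" using one by (metis distrib_left mult_1_right)
  then have "e0 * e1 = 0"
    using parts_unique(2)[OF e0 A1_0] parts_unique(2)[OF mult_A0_A0[OF e0 e0] mult_A0_A1[OF e0 e1]]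
    by simp
  ultimately show ?thesis using one e0 by simp
qed

definition parity :: "'a \<Rightarrow> 'a" where
  "parity x = even_part x - odd_part x"

lemma parity_eq: "a \<in> A0 \<Longrightarrow> b \<in> A1 \<Longrightarrow> parity (a + b) = a - b"
  unfolding parity_def using parts_unique by simp

lemma parity_A0: "a \<in> A0 \<Longrightarrow> parity a = a"
  using parity_eq[OF _ A1_0] by simp

lemma parity_A1: "b \<in> A1 \<Longrightarrow> parity b = - b"
  using parity_eq[OF A0_0] by simp

lemma parity_add: "parity (x + y) = parity x + parity y"
proof -
  have "x + y = (even_part x + even_part y) + (odd_part x + odd_part y)"
    using even_part_odd_part(3)[of x] even_part_odd_part(3)[of y] by (simp add: algebra_simps)
  then show ?thesis
    unfolding parity_def[of x] parity_def[of y]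
    by (simp add: parity_eq A0_add A1_add even_part_odd_part)
qed

lemma parity_diff: "parity (x - y) = parity x - parity y"
  using parity_add[of "x - y" y] by (simp add: eq_diff_eq)

lemma parity_mult: "parity (x * y) = parity x * parity y"
proof -
  define x0 x1 y0 y1 where "x0 = even_part x" "x1 = odd_part x" "y0 = even_part y" "y1 = odd_part y"
  have h: "x0 \<in> A0" "x1 \<in> A1" "y0 \<in> A0" "y1 \<in> A1" "x = x0 + x1" "y = y0 + y1"
    using even_part_odd_part unfolding x0_x1_y0_y1_def by auto
  have "x * y = (x0 * y0 + x1 * y1) + (x0 * y1 + x1 * y0)"
    using h(5,6) by (simp add: algebra_simps)
  then have "parity (x * y) = (x0 * y0 + x1 * y1) - (x0 * y1 + x1 * y0)"
    using h(1-4) by (simp add: parity_eq A0_add A1_add mult_A0_A0 mult_A0_A1 mult_A1_A0 mult_A1_A1)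
  also have "\<dots> = (x0 - x1) * (y0 - y1)"
    by (simp add: algebra_simps)
  finally show ?thesis using h by (simp add: parity_eq)
qed

lemma parity_parity: "parity (parity x) = x"
  using even_part_odd_part[of x] parity_eq[OF even_part_odd_part(1) A1_uminus[OF even_part_odd_part(2)]]
  unfolding parity_def[of x] by simp

lemma parity_jacobson:
  assumes "x \<in> jacobson"
  shows "parity x \<in> jacobson"
  unfolding jacobson_def mem_Collect_eq
proof
  fix a
  obtain b where "b * (1 - parity a * x) = 1" using assms unfolding jacobson_def by blast
  then have "parity (b * (1 - parity a * x)) = 1" using parity_A0[OF one_A0] by simp
  then have "parity b * (1 - a * parity x) = 1"
    by (simp add: parity_mult parity_diff parity_A0[OF one_A0] parity_parity)
  then show "\<exists>b. b * (1 - a * parity x) = 1" by blast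
qed

definition graded_assignment :: "(var \<Rightarrow> 'a) \<Rightarrow> bool" where
  "graded_assignment \<rho> \<longleftrightarrow> (\<forall>i. \<rho> (Inl i) \<in> A0) \<and> (\<forall>j. \<rho> (Inr j) \<in> A1)"

lemma Cgr_iff:
  "f \<in> Cgr sc A0 A1 \<longleftrightarrow>
     f \<in> fpoly \<and> f [] = 0 \<and> (\<forall>\<rho>. graded_assignment \<rho> \<longrightarrow> peval sc \<rho> f \<in> alg_center)"
  unfolding Cgr_def graded_assignment_def by auto

lemma graded_assignment_zero: "graded_assignment (\<lambda>_. 0)"
  unfolding graded_assignment_def using A0_0 A1_0 by simp

lemma monomial_value_graded:
  assumes "graded_assignment \<rho>"
  shows "monomial_value \<rho> w \<in> (if even (zdeg w) then A0 else A1)"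
proof (induction w)
  case Nil
  then show ?case using one_A0 by (simp add: zdeg_def)
next
  case (Cons v w)
  then show ?case
    using assms unfolding graded_assignment_def
    by (cases v) (auto simp: zdeg_Cons mult_A0_A0 mult_A0_A1 mult_A1_A0 mult_A1_A1 split: if_splits)
qed

lemma peval_even:
  assumes "graded_assignment \<rho>" "f \<in> fpoly_even"
  shows "peval sc \<rho> f \<in> A0"
  unfolding peval_def
proof (rule A0_sum)
  fix w assume "w \<in> supp f"
  then have "even (zdeg w)" using assms(2) unfolding fpoly_even_def by auto
  then show "sc (f w) (monomial_value \<rho> w) \<in> A0"
    using monomial_value_graded[OF assms(1), of w] A0_sc by simp
qed

lemma peval_odd:
  assumes "graded_assignment \<rho>" "f \<in> fpoly_odd"
  shows "peval sc \<rho> f \<in> A1"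
  unfolding peval_def
proof (rule A1_sum)
  fix w assume "w \<in> supp f"
  then have "odd (zdeg w)" using assms(2) unfolding fpoly_odd_def by auto
  then show "sc (f w) (monomial_value \<rho> w) \<in> A1"
    using monomial_value_graded[OF assms(1), of w] A1_sc by simp
qed

lemma graded_assignment_endo:
  assumes "graded_endo \<phi>" "graded_assignment \<rho>"
  shows "graded_assignment (\<lambda>v. peval sc \<rho> (\<phi> (fmonom [v])))"
  using assms by (simp add: graded_assignment_def graded_endo_even graded_endo_odd
    fmonom_even fmonom_odd peval_even peval_odd)

end

section \<open>Superalgebras with \<open>A = F \<oplus> J(A)\<close>\<close>

locale local_superalgebra = super_algebra sc A0 A1 + scalar_algebra_char_0 sc
  for sc :: "'k::field_char_0 \<Rightarrow> 'a::ring_1 \<Rightarrow> 'a" and A0 A1 +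
  assumes decomp: "\<forall>a. \<exists>!c. a - sc c 1 \<in> jacobson"
begin

definition scalar_part :: "'a \<Rightarrow> 'k" where
  "scalar_part x = (THE c. x - sc c 1 \<in> jacobson)"

lemma scalar_part: "x - sc (scalar_part x) 1 \<in> jacobson"
  unfolding scalar_part_def using theI'[of "\<lambda>c. x - sc c 1 \<in> jacobson"] decomp by blast

lemma scalar_part_unique: "x - sc c 1 \<in> jacobson \<Longrightarrow> scalar_part x = c"
  unfolding scalar_part_def using decomp by (intro the1_equality) auto

lemma scalar_part_eq_0_iff: "scalar_part x = 0 \<longleftrightarrow> x \<in> jacobson"
  using scalar_part[of x] scalar_part_unique[of x 0] by auto

lemma scalar_part_add: "scalar_part (x + y) = scalar_part x + scalar_part y"
proof (rule scalar_part_unique)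
  have "x + y - sc (scalar_part x + scalar_part y) 1
      = (x - sc (scalar_part x) 1) + (y - sc (scalar_part y) 1)"
    by (simp add: sc_add_left algebra_simps)
  then show "x + y - sc (scalar_part x + scalar_part y) 1 \<in> jacobson"
    using jacobson_add[OF scalar_part[of x] scalar_part[of y]] by (simp only:)
qed

lemma scalar_part_sc: "scalar_part (sc c x) = c * scalar_part x"
proof (rule scalar_part_unique)
  have "sc c x - sc (c * scalar_part x) 1 = sc c (x - sc (scalar_part x) 1)"
    by (simp add: sc_diff_right sc_mult)
  then show "sc c x - sc (c * scalar_part x) 1 \<in> jacobson"
    using sc_jacobson[OF scalar_part] by simp
qed

lemma scalar_part_mult: "scalar_part (x * y) = scalar_part x * scalar_part y"
proof (rule scalar_part_unique)
  define jx jy where "jx = x - sc (scalar_part x) 1" and "jy = y - sc (scalar_part y) 1"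
  have "x * y - sc (scalar_part x * scalar_part y) 1
      = jx * jy + jx * sc (scalar_part y) 1 + sc (scalar_part x) 1 * jy"
    unfolding jx_def jy_def by (simp add: algebra_simps sc_mult_sc)
  moreover have "jx \<in> jacobson" "jy \<in> jacobson"
    unfolding jx_def jy_def by (simp_all add: scalar_part)
  ultimately show "x * y - sc (scalar_part x * scalar_part y) 1 \<in> jacobson"
    by (simp add: jacobson_add jacobson_mult_left jacobson_mult_right)
qed

lemma scalar_part_sum: "scalar_part (\<Sum>i\<in>S. f i) = (\<Sum>i\<in>S. scalar_part (f i))"
  by (induction S rule: infinite_finite_induct)
    (auto simp: scalar_part_add scalar_part_eq_0_iff jacobson_0)

lemma scalar_part_prod_list:
  "scalar_part (prod_list (map f w)) = prod_list (map (\<lambda>v. scalar_part (f v)) w)"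
  by (induction w) (auto simp: scalar_part_mult scalar_part_unique jacobson_0)

lemma scalar_part_parity: "scalar_part (parity x) = scalar_part x"
proof (rule scalar_part_unique)
  have "parity x - sc (scalar_part x) 1 = parity (x - sc (scalar_part x) 1)"
    by (simp add: parity_diff parity_A0 A0_sc one_A0)
  then show "parity x - sc (scalar_part x) 1 \<in> jacobson"
    using parity_jacobson[OF scalar_part] by simp
qed

lemma scalar_part_A1: "a \<in> A1 \<Longrightarrow> scalar_part a = 0"
  using scalar_part_parity[of a] scalar_part_sc[of "- 1" a]
  by (simp add: parity_A1 sc_minus_one)

lemma center_eq_scalars_plus_radical:
  "alg_center = {sc c 1 + j | c j. j \<in> jacobson \<inter> alg_center}"
proof (intro equalityI subsetI)
  fix z :: 'a assume z: "z \<in> alg_center"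
  have "z - sc (scalar_part z) 1 \<in> jacobson \<inter> alg_center"
    using scalar_part center_diff[OF z sc_one_center] by blast
  then show "z \<in> {sc c 1 + j | c j. j \<in> jacobson \<inter> alg_center}"
    by (intro CollectI exI[of _ "scalar_part z"] exI[of _ "z - sc (scalar_part z) 1"]) simp
qed (auto intro: center_add sc_one_center)

text \<open>With \<open>l v\<close> the scalar part of \<open>\<rho> v\<close> and \<open>a\<close> even and not central, evaluating \<open>f\<close> at
  \<open>v \<mapsto> l v (s + a)\<close> gives the value at \<open>s + a\<close> of the one-variable polynomial \<open>f(l t)\<close>. So
  this polynomial is centralizing, hence constant, hence zero; and its value at \<open>t = 1\<close> is the
  scalar part of \<open>f(\<rho>)\<close>.\<close>

lemma Cgr_value_jacobson:
  assumes noncentral: "\<not> A0 \<subseteq> alg_center"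
    and f: "f \<in> Cgr sc A0 A1" and \<rho>: "graded_assignment \<rho>"
  shows "peval sc \<rho> f \<in> jacobson"
proof -
  obtain a where a: "a \<in> A0" "a \<notin> alg_center" using noncentral by blast
  have fp: "f \<in> fpoly" and f0: "f [] = 0"
    and central: "\<And>\<rho>. graded_assignment \<rho> \<Longrightarrow> peval sc \<rho> f \<in> alg_center"
    using f unfolding Cgr_iff by auto
  define l where "l v = scalar_part (\<rho> v)" for v
  have "l (Inr j) = 0" for j
    using \<rho> scalar_part_A1 unfolding l_def graded_assignment_def by simp
  then have "graded_assignment (\<lambda>v. sc (l v) (sc s 1 + a))" for s
    unfolding graded_assignment_def using A0_sc A0_add A1_0 one_A0 a(1) by simp
  then have "subst_poly f l \<in> centralizing_polys a"
    unfolding centralizing_polys_def by (simp add: alg_poly_subst_poly central)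
  then have "subst_poly f l = [:f []:]"
    using centralizing_polys_degree_0[OF a(2)] coeff_0_subst_poly[OF fpoly_finite_supp[OF fp]]
    by (metis degree_0_id)
  then have "poly (subst_poly f l) 1 = 0" using f0 by simp
  moreover have "scalar_part (peval sc \<rho> f) = poly (subst_poly f l) 1"
    unfolding peval_def poly_subst_poly_1 l_def
    by (simp add: scalar_part_sum scalar_part_sc scalar_part_prod_list)
  ultimately show ?thesis using scalar_part_eq_0_iff by simp
qed

lemma Cgr_graded_endo:
  assumes noncentral: "\<not> A0 \<subseteq> alg_center"
    and \<phi>: "graded_endo \<phi>" and f: "f \<in> Cgr sc A0 A1"
  shows "\<phi> f \<in> Cgr sc A0 A1"
proof -
  have fp: "f \<in> fpoly" and f0: "f [] = 0" using f unfolding Cgr_iff by auto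
  have evaluation: "peval sc \<rho> (\<phi> f) \<in> jacobson \<inter> alg_center" if "graded_assignment \<rho>" for \<rho>
  proof -
    have "graded_assignment (\<lambda>v. peval sc \<rho> (\<phi> (fmonom [v])))"
      using graded_assignment_endo[OF \<phi> that] .
    then show ?thesis
      unfolding peval_endo[OF \<phi> fp f0]
      using Cgr_value_jacobson[OF noncentral f] f unfolding Cgr_iff by blast
  qed
  have "\<phi> f \<in> fpoly" using graded_endo_fpoly[OF \<phi> fp] .
  moreover have "\<phi> f [] = 0"
    using evaluation[OF graded_assignment_zero] peval_zero_assignment[OF \<open>\<phi> f \<in> fpoly\<close>]
    by (simp add: sc_one_jacobson_iff)
  ultimately show ?thesis using evaluation unfolding Cgr_iff by blast
qed

lemma Cgr_fpoly_ideal: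
  assumes noncentral: "\<not> A0 \<subseteq> alg_center"
    and ideal: "alg_ideal sc (jacobson \<inter> alg_center)"
  shows "fpoly_ideal (Cgr sc A0 A1)"
proof -
  have fmult_closed: "fmult g f \<in> Cgr sc A0 A1 \<and> fmult f g \<in> Cgr sc A0 A1"
    if f: "f \<in> Cgr sc A0 A1" and g: "g \<in> fpoly" for f g :: "var list \<Rightarrow> 'k"
  proof -
    have fp: "f \<in> fpoly" and f0: "f [] = 0" using f unfolding Cgr_iff by auto
    have "peval sc \<rho> g * peval sc \<rho> f \<in> alg_center \<and> peval sc \<rho> f * peval sc \<rho> g \<in> alg_center"
      if "graded_assignment \<rho>" for \<rho>
      using Cgr_value_jacobson[OF noncentral f that] f that ideal
      unfolding Cgr_iff alg_ideal_def by blast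
    then show ?thesis
      unfolding Cgr_iff using fp f0 g by (simp add: fpoly_fmult peval_fmult fmult_Nil)
  qed
  show ?thesis
    unfolding fpoly_ideal_def
  proof (intro conjI ballI allI)
    show "Cgr sc A0 A1 \<subseteq> fpoly" unfolding Cgr_def by blast
    show "(\<lambda>_. 0) \<in> Cgr sc A0 A1"
      unfolding Cgr_iff by (simp add: fpoly_zero peval_zero center_0)
  next
    fix f g assume "f \<in> Cgr sc A0 A1" "g \<in> Cgr sc A0 A1"
    then show "(\<lambda>w. f w + g w) \<in> Cgr sc A0 A1"
      unfolding Cgr_iff by (simp add: fpoly_add peval_add center_add)
  next
    fix c f assume "f \<in> Cgr sc A0 A1"
    then show "(\<lambda>w. c * f w) \<in> Cgr sc A0 A1"
      unfolding Cgr_iff by (simp add: fpoly_scale peval_scale sc_center)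
  qed (use fmult_closed in blast)+
qed

end

theorem proposition2p2:
  fixes sc :: "'k::field_char_0 \<Rightarrow> 'a::ring_1 \<Rightarrow> 'a"
    and A0 A1 :: "'a set"
  assumes super: "superalgebra sc A0 A1"
    and decomp: "\<forall>a. \<exists>!c. a - sc c 1 \<in> jacobson"
    and noncentral: "\<not> A0 \<subseteq> alg_center"
  shows "alg_center = {sc c 1 + j | c j. j \<in> jacobson \<inter> alg_center}
         \<and> (\<forall>c. sc c 1 \<in> jacobson \<inter> alg_center \<longrightarrow> sc c 1 = 0)
         \<and> (graded_ideal sc A0 A1 (jacobson \<inter> alg_center) \<longrightarrow> T2_ideal (Cgr sc A0 A1))"
proof -
  interpret super_algebra sc A0 A1 by (rule super_algebra.intro[OF super])
  interpret local_superalgebra sc A0 A1 by unfold_locales (rule decomp)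
  have "T2_ideal (Cgr sc A0 A1)" if "graded_ideal sc A0 A1 (jacobson \<inter> alg_center)"
    using that unfolding T2_ideal_def graded_ideal_def
    by (blast intro: Cgr_fpoly_ideal[OF noncentral] Cgr_graded_endo[OF noncentral])
  moreover have "\<forall>c. sc c 1 \<in> jacobson \<inter> alg_center \<longrightarrow> sc c 1 = 0"
    using sc_one_jacobson_iff by simp
  ultimately show ?thesis
    using center_eq_scalars_plus_radical by blast
qed

end
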